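(* Fix a sequence of matchings and any non-negative load vector at the end of round $t_1$, and let $\mathcal{B}$ be an arbitrary subset of the tokens. Then for any subset of nodes $D \subseteq V$ and any round $t_2 > t_1$, \[ \Pr\Big[ \bigwedge_{i \in \mathcal{B}} \big(w_i^{(t_2)} \in D\big) \Big] \leq \prod_{i\in\mathcal{B}}\mathbf{M}_{w_i^{(t_1)},D}^{[t_1+1,t_2]} = \prod_{i \in \mathcal{B}} \Pr\big[ w_i^{(t_2)} \in D \big]. \]
   Context: $G=(V,E)$ has $n$ nodes; a matching $\mathbf{M}^{(t)}\subseteq E$ is identified with the symmetric matrix with entries $1/2$ on $(u,u),(v,v),(u,v),(v,u)$ for $\{u,v\}\in\mathbf{M}^{(t)}$, $1$ on the diagonal for unmatched nodes, $0$ elsewhere; $\mathbf{M}^{[a,b]}=\prod_{s=a}^b\mathbf{M}^{(s)}$ (identity if $a>b$), and $\mathbf{M}_{u,D}=\sum_{v\in D}\mathbf{M}_{u,v}$. Token-based description of the discrete protocol: tokens are distinguishable; $w^{(t)}_i$ is the node holding token $i$ at the end of round $t$, $x^{(t)}_u$ the number of tokens at $u$. If $u,v$ are matched in round $t$, all tokens at $u$ and $v$ are put in an urn; with probability $1/2$ node $u$ draws $\lceil (x^{(t-1)}_u+x^{(t-1)}_v)/2\rceil$ tokens uniformly at random without replacement, otherwise $\lfloor (x^{(t-1)}_u+x^{(t-1)}_v)/2\rfloor$ (independently over matched edges and rounds); $v$ gets the rest. Unmatched nodes keep their tokens. *)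

theory Defs
  imports "HOL-Probability.Probability"
begin

definition matching :: "'v set set \<Rightarrow> bool" where
  "matching Mt \<longleftrightarrow> (\<forall>e\<in>Mt. card e = 2) \<and> (\<forall>e\<in>Mt. \<forall>e'\<in>Mt. e \<noteq> e' \<longrightarrow> e \<inter> e' = {})"

definition match_matrix :: "'v set set \<Rightarrow> 'v \<Rightarrow> 'v \<Rightarrow> real" where
  "match_matrix Mt u v =
     (if u = v then (if \<exists>e\<in>Mt. u \<in> e then 1/2 else 1)
      else (if {u, v} \<in> Mt then 1/2 else 0))"

definition id_matrix :: "'v \<Rightarrow> 'v \<Rightarrow> real" where
  "id_matrix u v = (if u = v then 1 else 0)"

definition mat_mult :: "('v::finite \<Rightarrow> 'v \<Rightarrow> real) \<Rightarrow> ('v \<Rightarrow> 'v \<Rightarrow> real) \<Rightarrow> 'v \<Rightarrow> 'v \<Rightarrow> real" where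
  "mat_mult A B u v = (\<Sum>w\<in>UNIV. A u w * B w v)"

fun mat_prod_from :: "(nat \<Rightarrow> 'v set set) \<Rightarrow> nat \<Rightarrow> nat \<Rightarrow> 'v::finite \<Rightarrow> 'v \<Rightarrow> real" where
  "mat_prod_from M a 0 = id_matrix"
| "mat_prod_from M a (Suc n) = mat_mult (mat_prod_from M a n) (match_matrix (M (a + n)))"

text \<open>M^[a,b] = prod_{s=a}^b M^(s) (identity if a > b).\<close>
definition mat_interval :: "(nat \<Rightarrow> 'v set set) \<Rightarrow> nat \<Rightarrow> nat \<Rightarrow> 'v::finite \<Rightarrow> 'v \<Rightarrow> real" where
  "mat_interval M a b = mat_prod_from M a (Suc b - a)"

definition mat_row_set :: "('v \<Rightarrow> 'v \<Rightarrow> real) \<Rightarrow> 'v \<Rightarrow> 'v set \<Rightarrow> real" where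
  "mat_row_set A u D = (\<Sum>v\<in>D. A u v)"

text \<open>A configuration is a placement \<open>w :: 't \<Rightarrow> 'v\<close> of the (distinguishable) tokens on
  the nodes; the load of node u is \<open>card {i. w i = u}\<close>.
  For a matched edge e = {u,v} we take u = Min e (the paper's "node u").\<close>
definition urn_draw :: "'v::linorder set \<Rightarrow> ('t::finite \<Rightarrow> 'v) \<Rightarrow> 't set pmf" where
  "urn_draw e w =
     (let U = {i. w i \<in> e}; n = card U in
      bind_pmf (bernoulli_pmf (1/2)) (\<lambda>b.
        let k = (if b then (n + 1) div 2 else n div 2) in
        pmf_of_set {S. S \<subseteq> U \<and> card S = k}))"

definition matched_edge :: "'v set set \<Rightarrow> 'v \<Rightarrow> 'v set" where
  "matched_edge Mt x = (THE e. e \<in> Mt \<and> x \<in> e)"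

definition step_pmf :: "'v::{finite,linorder} set set \<Rightarrow> ('t::finite \<Rightarrow> 'v) \<Rightarrow> ('t \<Rightarrow> 'v) pmf" where
  "step_pmf Mt w =
     map_pmf (\<lambda>S i. if \<exists>e\<in>Mt. w i \<in> e
                      then (let e = matched_edge Mt (w i) in if i \<in> S e then Min e else Max e)
                      else w i)
             (Pi_pmf Mt {} (\<lambda>e. urn_draw e w))"

text \<open>Distribution of the placement after n further rounds, starting from placement w0
  at the end of round t1 (rounds t1+1, ..., t1+n use matchings M (t1+1), ..., M (t1+n)).\<close>
fun run_pmf :: "(nat \<Rightarrow> 'v::{finite,linorder} set set) \<Rightarrow> nat \<Rightarrow> ('t::finite \<Rightarrow> 'v) \<Rightarrow> nat \<Rightarrow> ('t \<Rightarrow> 'v) pmf" where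
  "run_pmf M t1 w0 0 = return_pmf w0"
| "run_pmf M t1 w0 (Suc n) = bind_pmf (run_pmf M t1 w0 n) (step_pmf (M (t1 + Suc n)))"

definition config_at :: "(nat \<Rightarrow> 'v::{finite,linorder} set set) \<Rightarrow> nat \<Rightarrow> ('t::finite \<Rightarrow> 'v) \<Rightarrow> nat \<Rightarrow> ('t \<Rightarrow> 'v) pmf" where
  "config_at M t1 w0 t2 = run_pmf M t1 w0 (t2 - t1)"

end

(*
  On a matched edge holding n tokens, one endpoint receives a uniformly random subset of size
  ceil(n/2) or floor(n/2), each with probability 1/2. For a uniform k-subset S of a 2k-set and
  a, b >= 0, the product over T of (a if i is in S, b otherwise) has expectation at most
  ((a + b)/2)^|T|: double counting the pairs (S, y) in which S separates y from a fixed x in T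
  reduces the claim to a (2k-2)-set, at the cost of a factor ab <= ((a + b)/2)^2. The odd case
  follows by adding a dummy token. Since the urns of different edges are independent, one round
  satisfies E[prod_i h(w_i')] <= prod_i (M h)(w_i) for every h >= 0, and iterating over the rounds
  gives E[prod_i h(w_i^(t2))] <= prod_i (M^[t1+1,t2] h)(w_i^(t1)). Taking h the indicator of D gives
  the inequality; for a single token, the bounds for D and its complement add up to 1, so both
  are equalities.
*)

theory Submission
  imports Defs
begin

section \<open>Uniform k-subsets\<close>

definition ksubsets :: "'a set \<Rightarrow> nat \<Rightarrow> 'a set set" where
  "ksubsets W k = {S. S \<subseteq> W \<and> card S = k}"

definition subset_weight :: "'a set \<Rightarrow> real \<Rightarrow> real \<Rightarrow> 'a set \<Rightarrow> real" where
  "subset_weight T a b S = (\<Prod>i\<in>T. if i \<in> S then a else b)"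

definition weight_sum :: "'a set \<Rightarrow> nat \<Rightarrow> 'a set \<Rightarrow> real \<Rightarrow> real \<Rightarrow> real" where
  "weight_sum W k T a b = (\<Sum>S\<in>ksubsets W k. subset_weight T a b S)"

lemma finite_ksubsets [simp]: "finite W \<Longrightarrow> finite (ksubsets W k)"
  by (simp add: ksubsets_def)

lemma card_ksubsets: "finite W \<Longrightarrow> card (ksubsets W k) = card W choose k"
  by (simp add: ksubsets_def n_subsets)

lemma subset_weight_nonneg: "0 \<le> a \<Longrightarrow> 0 \<le> b \<Longrightarrow> 0 \<le> subset_weight T a b S"
  unfolding subset_weight_def by (intro prod_nonneg) auto

lemma subset_weight_cong:
  "(\<And>i. i \<in> T \<Longrightarrow> i \<in> S \<longleftrightarrow> i \<in> S') \<Longrightarrow> subset_weight T a b S = subset_weight T a b S'"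
  unfolding subset_weight_def by (intro prod.cong) auto

lemma subset_weight_remove:
  "finite T \<Longrightarrow> x \<in> T \<Longrightarrow>
     subset_weight T a b S = (if x \<in> S then a else b) * subset_weight (T - {x}) a b S"
  unfolding subset_weight_def by (rule prod.remove)

lemma central_binomial_Suc:
  "Suc k * (2 * Suc k choose Suc k) = 2 * (2 * k + 1) * (2 * k choose k)"
proof -
  have sym: "(2 * k + 1 choose k) = (2 * k + 1 choose Suc k)"
    using binomial_symmetric[of "Suc k" "2 * k + 1"] by simp
  have "Suc k * (2 * Suc k choose Suc k) = (2 * k + 2) * (2 * k + 1 choose Suc k)"
    using Suc_times_binomial_eq[of "2 * k + 1" k] sym by (simp add: mult.commute)
  also have "\<dots> = 2 * ((2 * k + 1 choose Suc k) * Suc k)" by simp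
  also have "\<dots> = 2 * ((2 * k + 1) * (2 * k choose k))"
    using Suc_times_binomial_eq[of "2 * k" k] by simp
  finally show ?thesis by simp
qed

lemma ksubsets_separating:
  assumes "finite W" "x \<in> W" "y \<in> W" "x \<noteq> y"
  shows "{S \<in> ksubsets W (Suc k). (x \<in> S) \<noteq> (y \<in> S)}
           = insert x ` ksubsets (W - {x, y}) k \<union> insert y ` ksubsets (W - {x, y}) k"
proof (intro set_eqI iffI)
  fix S assume S: "S \<in> {S \<in> ksubsets W (Suc k). (x \<in> S) \<noteq> (y \<in> S)}"
  then have "finite S" using assms(1) by (auto simp: ksubsets_def intro: finite_subset)
  then consider "x \<in> S" "S - {x} \<in> ksubsets (W - {x, y}) k"
    | "y \<in> S" "S - {y} \<in> ksubsets (W - {x, y}) k"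
    using S by (auto simp: ksubsets_def)
  then show "S \<in> insert x ` ksubsets (W - {x, y}) k \<union> insert y ` ksubsets (W - {x, y}) k"
  proof cases
    case 1
    then have "S = insert x (S - {x})" by auto
    with 1 show ?thesis by blast
  next
    case 2
    then have "S = insert y (S - {y})" by auto
    with 2 show ?thesis by blast
  qed
next
  fix S assume "S \<in> insert x ` ksubsets (W - {x, y}) k \<union> insert y ` ksubsets (W - {x, y}) k"
  then obtain S0 where S0: "S0 \<in> ksubsets (W - {x, y}) k" "S = insert x S0 \<or> S = insert y S0"
    by blast
  moreover have "finite S0" using S0(1) assms(1) by (auto simp: ksubsets_def intro: finite_subset)
  moreover have "x \<notin> S0" "y \<notin> S0" using S0(1) by (auto simp: ksubsets_def)
  ultimately show "S \<in> {S \<in> ksubsets W (Suc k). (x \<in> S) \<noteq> (y \<in> S)}"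
    using assms by (auto simp: ksubsets_def)
qed

lemma sum_ksubsets_separating:
  assumes "finite W" "x \<in> W" "y \<in> W" "x \<noteq> y"
  shows "(\<Sum>S\<in>{S \<in> ksubsets W (Suc k). (x \<in> S) \<noteq> (y \<in> S)}. f S)
           = (\<Sum>S\<in>ksubsets (W - {x, y}) k. f (insert x S) + f (insert y S))"
proof -
  let ?Q = "ksubsets (W - {x, y}) k"
  have "inj_on (insert z) ?Q" if "z \<in> {x, y}" for z
    using that by (intro inj_onI) (auto simp: ksubsets_def)
  moreover have "insert x ` ?Q \<inter> insert y ` ?Q = {}"
    using assms(4) by (auto simp: ksubsets_def)
  ultimately have "(\<Sum>S\<in>insert x ` ?Q \<union> insert y ` ?Q. f S)
      = (\<Sum>S\<in>?Q. f (insert x S)) + (\<Sum>S\<in>?Q. f (insert y S))"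
    using assms(1) by (simp add: sum.union_disjoint sum.reindex)
  then show ?thesis unfolding ksubsets_separating[OF assms] sum.distrib .
qed

lemma card_separated:
  assumes "finite W" "card W = 2 * k" "x \<in> W" "S \<in> ksubsets W k"
  shows "card {y \<in> W - {x}. (x \<in> S) \<noteq> (y \<in> S)} = k"
proof (cases "x \<in> S")
  case True
  then have "{y \<in> W - {x}. (x \<in> S) \<noteq> (y \<in> S)} = W - S" using assms(3) by auto
  moreover have "card (W - S) = card W - card S"
    using assms(1,4) by (intro card_Diff_subset) (auto simp: ksubsets_def intro: finite_subset)
  ultimately show ?thesis using assms(2,4) by (simp add: ksubsets_def)
next
  case False
  then have "{y \<in> W - {x}. (x \<in> S) \<noteq> (y \<in> S)} = S" using assms(4) by (auto simp: ksubsets_def)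
  then show ?thesis using assms(4) by (simp add: ksubsets_def)
qed

lemma sum_ksubsets_double_count:
  fixes f :: "'a set \<Rightarrow> real"
  assumes "finite W" "card W = 2 * k" "x \<in> W"
  shows "real k * (\<Sum>S\<in>ksubsets W k. f S)
           = (\<Sum>y\<in>W - {x}. \<Sum>S\<in>{S \<in> ksubsets W k. (x \<in> S) \<noteq> (y \<in> S)}. f S)"
proof -
  have "real k * (\<Sum>S\<in>ksubsets W k. f S)
          = (\<Sum>S\<in>ksubsets W k. real (card {y \<in> W - {x}. (x \<in> S) \<noteq> (y \<in> S)}) * f S)"
    using card_separated[OF assms] by (simp add: sum_distrib_left)
  also have "\<dots> = (\<Sum>S\<in>ksubsets W k. \<Sum>y\<in>W - {x}. if (x \<in> S) \<noteq> (y \<in> S) then f S else 0)"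
    using assms(1) by (simp add: sum.If_cases Int_def)
  also have "\<dots> = (\<Sum>y\<in>W - {x}. \<Sum>S\<in>ksubsets W k. if (x \<in> S) \<noteq> (y \<in> S) then f S else 0)"
    by (rule sum.swap)
  also have "\<dots> = (\<Sum>y\<in>W - {x}. \<Sum>S\<in>{S \<in> ksubsets W k. (x \<in> S) \<noteq> (y \<in> S)}. f S)"
    using assms(1) by (simp add: sum.inter_filter)
  finally show ?thesis .
qed

lemma subset_weight_insert_pair:
  assumes "finite T" "x \<in> T" "x \<noteq> y" "x \<notin> S" "y \<notin> S"
  shows "subset_weight T a b (insert x S) + subset_weight T a b (insert y S)
           = (if y \<in> T then 2 * (a * b) else a + b) * subset_weight (T - {x, y}) a b S"
proof -
  have split: "subset_weight T a b S' = (if x \<in> S' then a else b)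
      * (if y \<in> T then if y \<in> S' then a else b else 1) * subset_weight (T - {x, y}) a b S'" for S'
  proof (cases "y \<in> T")
    case True
    then show ?thesis
      using assms(1-3) subset_weight_remove[of T x] subset_weight_remove[of "T - {x}" y]
      by (simp add: Diff_insert2 [symmetric] insert_commute)
  next
    case False
    then have "T - {x, y} = T - {x}" by auto
    then show ?thesis using False assms(1,2) subset_weight_remove[of T x] by simp
  qed
  have "subset_weight (T - {x, y}) a b (insert z S) = subset_weight (T - {x, y}) a b S" if "z \<in> {x, y}" for z
    using that by (intro subset_weight_cong) auto
  then show ?thesis using assms(3-5) by (simp add: split algebra_simps)
qed

lemma pair_factor_le:
  fixes a b :: real
  assumes "finite T" "x \<in> T" "x \<noteq> y" "0 \<le> a" "0 \<le> b"
  shows "(if y \<in> T then 2 * (a * b) else a + b) * ((a + b) / 2) ^ card (T - {x, y})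
           \<le> 2 * ((a + b) / 2) ^ card T"
proof (cases "y \<in> T")
  case True
  define s where "s = (a + b) / 2"
  have "s ^ 2 - a * b = ((a - b) / 2) ^ 2" by (simp add: s_def power2_eq_square field_simps)
  then have ab: "a * b \<le> s ^ 2" using zero_le_power2[of "(a - b) / 2"] by linarith
  have "card {x, y} \<le> card T" using True assms(1-3) by (intro card_mono) auto
  then have card: "card T = card (T - {x, y}) + 2" using True assms(1-3) by (simp add: card_Diff_subset)
  have "(if y \<in> T then 2 * (a * b) else a + b) * s ^ card (T - {x, y}) = 2 * (a * b) * s ^ card (T - {x, y})"
    using True by simp
  also have "\<dots> \<le> 2 * s ^ 2 * s ^ card (T - {x, y})"
    using ab by (intro mult_right_mono) (auto simp: s_def assms(4,5))
  also have "\<dots> = 2 * s ^ card T" by (simp only: card power_add mult_ac)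
  finally show ?thesis unfolding s_def .
next
  case False
  then have "T - {x, y} = T - {x}" by auto
  then have "card T = Suc (card (T - {x, y}))" using card_Suc_Diff1[OF assms(1,2)] by simp
  then show ?thesis using False by simp
qed

lemma weight_sum_double_count:
  assumes "finite W" "card W = 2 * Suc k" "x \<in> T" "T \<subseteq> W"
  shows "real (Suc k) * weight_sum W (Suc k) T a b
           = (\<Sum>y\<in>W - {x}. (if y \<in> T then 2 * (a * b) else a + b) * weight_sum (W - {x, y}) k (T - {x, y}) a b)"
proof -
  have "finite T" "x \<in> W" using assms finite_subset by auto
  have "real (Suc k) * weight_sum W (Suc k) T a b
      = (\<Sum>y\<in>W - {x}. \<Sum>S\<in>{S \<in> ksubsets W (Suc k). (x \<in> S) \<noteq> (y \<in> S)}. subset_weight T a b S)"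
    unfolding weight_sum_def using assms(1,2) \<open>x \<in> W\<close> by (rule sum_ksubsets_double_count)
  also have "\<dots> = (\<Sum>y\<in>W - {x}. \<Sum>S\<in>ksubsets (W - {x, y}) k.
                     subset_weight T a b (insert x S) + subset_weight T a b (insert y S))"
    using assms(1) \<open>x \<in> W\<close> by (intro sum.cong refl sum_ksubsets_separating) auto
  also have "\<dots> = (\<Sum>y\<in>W - {x}. (if y \<in> T then 2 * (a * b) else a + b) * weight_sum (W - {x, y}) k (T - {x, y}) a b)"
    unfolding weight_sum_def sum_distrib_left using \<open>finite T\<close> assms(3)
    by (intro sum.cong refl subset_weight_insert_pair) (auto simp: ksubsets_def)
  finally show ?thesis .
qed

lemma weight_sum_even_le:
  assumes "finite W" "card W = 2 * k" "T \<subseteq> W" "0 \<le> a" "0 \<le> b"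
  shows "weight_sum W k T a b \<le> real (2 * k choose k) * ((a + b) / 2) ^ card T"
  using assms(1-3)
proof (induction k arbitrary: W T)
  case 0
  then show ?case by (simp add: weight_sum_def subset_weight_def card_ksubsets)
next
  case (Suc k)
  define s where "s = (a + b) / 2"
  show ?case
  proof (cases "T = {}")
    case True
    then show ?thesis using Suc.prems by (simp add: weight_sum_def subset_weight_def card_ksubsets)
  next
    case False
    then obtain x where x: "x \<in> T" by blast
    with Suc.prems have "x \<in> W" "finite T" using finite_subset by auto
    have "real (Suc k) * weight_sum W (Suc k) T a b \<le> (\<Sum>y\<in>W - {x}. real (2 * k choose k) * (2 * s ^ card T))"
      unfolding weight_sum_double_count[OF Suc.prems(1,2) x Suc.prems(3)]
    proof (rule sum_mono)
      fix y assume y: "y \<in> W - {x}"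
      then have "card {x, y} = 2" by auto
      with y have "card (W - {x, y}) = 2 * k" using Suc.prems \<open>x \<in> W\<close> by (simp add: card_Diff_subset)
      then have "weight_sum (W - {x, y}) k (T - {x, y}) a b \<le> real (2 * k choose k) * s ^ card (T - {x, y})"
        unfolding s_def using Suc by (intro Suc.IH) auto
      then have "(if y \<in> T then 2 * (a * b) else a + b) * weight_sum (W - {x, y}) k (T - {x, y}) a b
          \<le> real (2 * k choose k) * ((if y \<in> T then 2 * (a * b) else a + b) * s ^ card (T - {x, y}))"
        using assms(4,5) by (simp add: mult_left_mono mult.left_commute)
      also have "\<dots> \<le> real (2 * k choose k) * (2 * s ^ card T)"
        unfolding s_def using y \<open>finite T\<close> x assms(4,5) by (intro mult_left_mono pair_factor_le) auto
      finally show "(if y \<in> T then 2 * (a * b) else a + b) * weight_sum (W - {x, y}) k (T - {x, y}) a b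
          \<le> real (2 * k choose k) * (2 * s ^ card T)" .
    qed
    also have "\<dots> = real (Suc k) * (real (2 * Suc k choose Suc k) * s ^ card T)"
    proof -
      have "card (W - {x}) = 2 * k + 1" using Suc.prems \<open>x \<in> W\<close> by simp
      then have "(\<Sum>y\<in>W - {x}. real (2 * k choose k) * (2 * s ^ card T))
          = 2 * real (2 * k + 1) * real (2 * k choose k) * s ^ card T"
        by (simp only: sum_constant mult_ac)
      also have "\<dots> = real (Suc k) * real (2 * Suc k choose Suc k) * s ^ card T"
        by (metis central_binomial_Suc of_nat_mult of_nat_numeral)
      finally show ?thesis by (simp only: mult.assoc)
    qed
    finally show ?thesis unfolding s_def by (simp add: mult_le_cancel_left_pos)
  qed
qed

lemma ksubsets_insert:
  assumes "finite W" "z \<notin> W"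
  shows "ksubsets (insert z W) (Suc k) = ksubsets W (Suc k) \<union> insert z ` ksubsets W k"
proof (intro set_eqI iffI)
  fix S assume S: "S \<in> ksubsets (insert z W) (Suc k)"
  show "S \<in> ksubsets W (Suc k) \<union> insert z ` ksubsets W k"
  proof (cases "z \<in> S")
    case True
    have "finite S" using S assms(1) by (auto simp: ksubsets_def intro: finite_subset)
    with S True have "S - {z} \<in> ksubsets W k" by (auto simp: ksubsets_def)
    moreover have "S = insert z (S - {z})" using True by auto
    ultimately show ?thesis by blast
  next
    case False
    with S show ?thesis by (auto simp: ksubsets_def)
  qed
next
  fix S assume "S \<in> ksubsets W (Suc k) \<union> insert z ` ksubsets W k"
  then show "S \<in> ksubsets (insert z W) (Suc k)"
  proof
    assume "S \<in> insert z ` ksubsets W k"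
    then obtain S0 where S0: "S0 \<in> ksubsets W k" "S = insert z S0" by blast
    moreover have "finite S0" "z \<notin> S0"
      using S0(1) assms by (auto simp: ksubsets_def intro: finite_subset)
    ultimately show ?thesis by (auto simp: ksubsets_def)
  qed (auto simp: ksubsets_def)
qed

lemma weight_sum_insert:
  assumes "finite W" "z \<notin> W" "z \<notin> T"
  shows "weight_sum (insert z W) (Suc k) T a b = weight_sum W (Suc k) T a b + weight_sum W k T a b"
proof -
  have "inj_on (insert z) (ksubsets W k)"
    using assms(2) by (intro inj_onI) (auto simp: ksubsets_def)
  moreover have "ksubsets W (Suc k) \<inter> insert z ` ksubsets W k = {}"
    using assms(2) by (auto simp: ksubsets_def)
  moreover have "subset_weight T a b (insert z S) = subset_weight T a b S" for S
    using assms(3) by (intro subset_weight_cong) auto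
  ultimately show ?thesis
    unfolding weight_sum_def ksubsets_insert[OF assms(1,2)] using assms(1)
    by (simp add: sum.union_disjoint sum.reindex)
qed

lemma weight_sum_image:
  assumes "inj g"
  shows "weight_sum (g ` W) k (g ` T) a b = weight_sum W k T a b"
proof -
  have "ksubsets (g ` W) k = image g ` ksubsets W k"
  proof (intro set_eqI iffI)
    fix S assume "S \<in> ksubsets (g ` W) k"
    then obtain S0 where "S0 \<subseteq> W" "S = g ` S0" "card S = k"
      by (auto simp: ksubsets_def subset_image_iff)
    moreover from this have "card S0 = k" using assms by (metis card_image inj_on_subset subset_UNIV)
    ultimately show "S \<in> image g ` ksubsets W k" by (auto simp: ksubsets_def)
  next
    fix S assume "S \<in> image g ` ksubsets W k"
    then obtain S0 where "S0 \<subseteq> W" "S = g ` S0" "card S0 = k" by (auto simp: ksubsets_def)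
    moreover from this have "card S = k" using assms by (metis card_image inj_on_subset subset_UNIV)
    ultimately show "S \<in> ksubsets (g ` W) k" by (auto simp: ksubsets_def)
  qed
  moreover have "inj_on (image g) X" for X
    using assms by (meson inj_image_eq_iff inj_onI)
  moreover have "subset_weight (g ` T) a b (g ` S) = subset_weight T a b S" for S
    using assms unfolding subset_weight_def
    by (simp add: prod.reindex inj_on_subset inj_image_mem_iff)
  ultimately show ?thesis unfolding weight_sum_def by (simp add: sum.reindex)
qed

lemma weight_sum_odd_le:
  assumes "finite W" "card W = 2 * r + 1" "T \<subseteq> W" "0 \<le> a" "0 \<le> b"
  shows "weight_sum W r T a b + weight_sum W (Suc r) T a b
           \<le> 2 * real (2 * r + 1 choose r) * ((a + b) / 2) ^ card T"
proof -
  let ?W = "insert None (Some ` W)"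
  have "weight_sum W r T a b + weight_sum W (Suc r) T a b = weight_sum ?W (Suc r) (Some ` T) a b"
    using assms(1) by (simp add: weight_sum_insert weight_sum_image)
  also have "\<dots> \<le> real (2 * Suc r choose Suc r) * ((a + b) / 2) ^ card (Some ` T)"
    using assms by (intro weight_sum_even_le) (auto simp: card_image)
  also have "(2 * Suc r choose Suc r) = 2 * (2 * r + 1 choose r)"
    using binomial_symmetric[of "Suc r" "2 * r + 1"] by simp
  finally show ?thesis by (simp add: card_image)
qed

lemma expectation_uniform_ksubset:
  assumes "finite U" "k \<le> card U"
  shows "measure_pmf.expectation (pmf_of_set (ksubsets U k)) (subset_weight T a b)
           = weight_sum U k T a b / real (card U choose k)"
proof -
  have "ksubsets U k \<noteq> {}"
    using assms card_ksubsets[of U k] by (auto simp: binomial_eq_0_iff)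
  then show ?thesis
    using assms(1) by (simp add: integral_pmf_of_set weight_sum_def card_ksubsets)
qed

lemma expectation_urn_draw_le:
  assumes "T \<subseteq> {i. w i \<in> e}" "0 \<le> a" "0 \<le> b"
  shows "measure_pmf.expectation (urn_draw e w) (subset_weight T a b) \<le> ((a + b) / 2) ^ card T"
proof -
  define U where "U = {i. w i \<in> e}"
  define n where "n = card U"
  define s where "s = ((a + b) / 2) ^ card T"
  have "urn_draw e w = bind_pmf (bernoulli_pmf (1/2))
          (\<lambda>c. pmf_of_set (ksubsets U (if c then (n + 1) div 2 else n div 2)))"
    unfolding urn_draw_def ksubsets_def Let_def U_def n_def ..
  then have "measure_pmf.expectation (urn_draw e w) (subset_weight T a b)
      = (weight_sum U ((n + 1) div 2) T a b / real (n choose ((n + 1) div 2))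
         + weight_sum U (n div 2) T a b / real (n choose (n div 2))) / 2"
    by (simp add: pmf_expectation_bind[where A = UNIV] UNIV_bool expectation_uniform_ksubset n_def)
  also have "\<dots> \<le> s"
  proof (cases "even n")
    case True
    then obtain k where k: "n = 2 * k" by blast
    have "weight_sum U k T a b \<le> real (2 * k choose k) * s"
      unfolding s_def using assms k by (intro weight_sum_even_le) (auto simp: U_def n_def)
    then show ?thesis using k by (simp add: divide_le_eq mult.commute)
  next
    case False
    then obtain r where r: "n = 2 * r + 1" using oddE by blast
    have "weight_sum U r T a b + weight_sum U (Suc r) T a b \<le> 2 * real (2 * r + 1 choose r) * s"
      unfolding s_def using assms r by (intro weight_sum_odd_le) (auto simp: U_def n_def)
    moreover have "(2 * r + 1 choose Suc r) = (2 * r + 1 choose r)"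
      using binomial_symmetric[of "Suc r" "2 * r + 1"] by simp
    moreover have "(2 * r + 1 + 1) div 2 = Suc r" "(2 * r + 1) div 2 = r" by simp_all
    ultimately show ?thesis using r by (simp add: field_simps)
  qed
  finally show ?thesis unfolding s_def .
qed

section \<open>Averaging matrices of matchings\<close>

definition mat_vec :: "('v::finite \<Rightarrow> 'v \<Rightarrow> real) \<Rightarrow> ('v \<Rightarrow> real) \<Rightarrow> 'v \<Rightarrow> real" where
  "mat_vec A h u = (\<Sum>v\<in>UNIV. A u v * h v)"

lemma mat_vec_id_matrix [simp]: "mat_vec id_matrix h = h"
proof
  fix u
  have "mat_vec id_matrix h u = (\<Sum>v\<in>UNIV. if v = u then h v else 0)"
    unfolding mat_vec_def id_matrix_def by (intro sum.cong) auto
  then show "mat_vec id_matrix h u = h u" by simp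
qed

lemma mat_vec_mat_mult: "mat_vec (mat_mult A B) h = mat_vec A (mat_vec B h)"
proof
  fix u
  have "mat_vec (mat_mult A B) h u = (\<Sum>v\<in>UNIV. \<Sum>x\<in>UNIV. A u x * B x v * h v)"
    unfolding mat_vec_def mat_mult_def by (simp add: sum_distrib_right)
  also have "\<dots> = (\<Sum>x\<in>UNIV. \<Sum>v\<in>UNIV. A u x * B x v * h v)"
    by (rule sum.swap)
  also have "\<dots> = mat_vec A (mat_vec B h) u"
    unfolding mat_vec_def by (simp add: sum_distrib_left mult.assoc)
  finally show "mat_vec (mat_mult A B) h u = mat_vec A (mat_vec B h) u" .
qed

lemma mat_row_set_eq_mat_vec: "mat_row_set A u D = mat_vec A (indicator D) u"
proof -
  have "mat_vec A (indicator D) u = (\<Sum>v\<in>UNIV. if v \<in> D then A u v else 0)"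
    unfolding mat_vec_def by (intro sum.cong) auto
  then show ?thesis by (simp add: mat_row_set_def sum.If_cases)
qed

lemma mat_vec_nonneg: "(\<And>v. 0 \<le> A u v) \<Longrightarrow> (\<And>v. 0 \<le> h v) \<Longrightarrow> 0 \<le> mat_vec A h u"
  unfolding mat_vec_def by (intro sum_nonneg mult_nonneg_nonneg)

lemma mat_row_set_Compl:
  assumes "mat_vec A (\<lambda>_. 1) u = 1"
  shows "mat_row_set A u (- D) = 1 - mat_row_set A u D"
proof -
  have "(\<Sum>v\<in>UNIV. A u v) = (\<Sum>v\<in>UNIV - D. A u v) + (\<Sum>v\<in>D. A u v)"
    by (rule sum.subset_diff) auto
  then show ?thesis using assms by (simp add: mat_row_set_def mat_vec_def Compl_eq_Diff_UNIV)
qed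

lemma matching_edge_unique:
  "matching Mt \<Longrightarrow> e \<in> Mt \<Longrightarrow> e' \<in> Mt \<Longrightarrow> u \<in> e \<Longrightarrow> u \<in> e' \<Longrightarrow> e = e'"
  unfolding matching_def by blast

lemma matched_edge_eq:
  assumes "matching Mt" "e \<in> Mt" "u \<in> e"
  shows "matched_edge Mt u = e"
  unfolding matched_edge_def using assms matching_edge_unique[OF assms(1)]
  by (intro the_equality) blast+

lemma matching_edge_eq_Min_Max:
  fixes e :: "'v::linorder set"
  assumes "matching Mt" "e \<in> Mt"
  shows "e = {Min e, Max e}" "Min e \<noteq> Max e"
proof -
  obtain x y where "e = {x, y}" "x \<noteq> y"
    using assms unfolding matching_def by (meson card_2_iff)
  then show "e = {Min e, Max e}" "Min e \<noteq> Max e"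
    by (simp_all add: min_def max_def insert_commute)
qed

lemma match_matrix_nonneg: "0 \<le> match_matrix Mt u v"
  unfolding match_matrix_def by auto

lemma mat_vec_match_matrix_matched:
  fixes Mt :: "'v::{finite,linorder} set set"
  assumes "matching Mt" "e \<in> Mt" "u \<in> e"
  shows "mat_vec (match_matrix Mt) h u = (h (Min e) + h (Max e)) / 2"
proof -
  have edge: "e = {Min e, Max e}" "Min e \<noteq> Max e" by (rule matching_edge_eq_Min_Max[OF assms(1,2)])+
  have "match_matrix Mt u v = (if v \<in> e then 1/2 else 0)" for v
  proof (cases "u = v")
    case False
    have "{u, v} \<in> Mt \<longleftrightarrow> v \<in> e"
    proof
      assume "{u, v} \<in> Mt"
      then have "{u, v} = e" using matching_edge_unique[OF assms(1) _ assms(2), of "{u, v}" u] assms(3) by simp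
      then show "v \<in> e" by auto
    next
      assume "v \<in> e"
      moreover have "card e = 2" using assms(1,2) by (simp add: matching_def)
      ultimately have "{u, v} = e"
        using assms(3) False by (intro card_subset_eq) auto
      then show "{u, v} \<in> Mt" using assms(2) by simp
    qed
    then show ?thesis using False unfolding match_matrix_def by auto
  qed (use assms in \<open>auto simp: match_matrix_def\<close>)
  then have "mat_vec (match_matrix Mt) h u = (\<Sum>v\<in>UNIV. if v \<in> e then h v / 2 else 0)"
    unfolding mat_vec_def by (intro sum.cong) auto
  also have "\<dots> = (\<Sum>v\<in>e. h v / 2)" by (simp add: sum.If_cases)
  also have "\<dots> = (\<Sum>v\<in>{Min e, Max e}. h v / 2)" using edge(1) by (rule arg_cong)
  also have "\<dots> = (h (Min e) + h (Max e)) / 2" using edge(2) by (simp add: add_divide_distrib)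
  finally show ?thesis .
qed

lemma mat_vec_match_matrix_unmatched:
  assumes "\<not> (\<exists>e\<in>Mt. u \<in> e)"
  shows "mat_vec (match_matrix Mt) h u = h u"
proof -
  have "mat_vec (match_matrix Mt) h u = (\<Sum>v\<in>UNIV. if v = u then h v else 0)"
    using assms unfolding mat_vec_def match_matrix_def by (intro sum.cong) auto
  then show ?thesis by simp
qed

lemma mat_vec_match_matrix_one:
  fixes Mt :: "'v::{finite,linorder} set set"
  assumes "matching Mt"
  shows "mat_vec (match_matrix Mt) (\<lambda>_. 1) = (\<lambda>_. 1)"
proof
  fix u show "mat_vec (match_matrix Mt) (\<lambda>_. 1) u = 1"
  proof (cases "\<exists>e\<in>Mt. u \<in> e")
    case True
    then obtain e where "e \<in> Mt" "u \<in> e" by blast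
    from mat_vec_match_matrix_matched[OF assms this, of "\<lambda>_. 1"] show ?thesis by simp
  qed (simp add: mat_vec_match_matrix_unmatched)
qed

lemma mat_vec_mat_prod_from_one:
  fixes M :: "nat \<Rightarrow> 'v::{finite,linorder} set set"
  assumes "\<And>t. matching (M t)"
  shows "mat_vec (mat_prod_from M a n) (\<lambda>_. 1) = (\<lambda>_. 1)"
proof (induction n)
  case (Suc n)
  then show ?case by (simp only: mat_prod_from.simps mat_vec_mat_mult mat_vec_match_matrix_one assms)
qed simp

section \<open>Rounds of the protocol\<close>

lemma prod_split_matching:
  fixes w :: "'t::finite \<Rightarrow> 'v::finite"
  assumes "matching Mt"
  shows "(\<Prod>i\<in>B. g i) = (\<Prod>i\<in>{i \<in> B. \<forall>e\<in>Mt. w i \<notin> e}. g i) * (\<Prod>e\<in>Mt. \<Prod>i\<in>{i \<in> B. w i \<in> e}. g i)"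
proof -
  let ?B0 = "{i \<in> B. \<forall>e\<in>Mt. w i \<notin> e}" and ?U = "\<Union>e\<in>Mt. {i \<in> B. w i \<in> e}"
  have "(\<Prod>i\<in>B. g i) = (\<Prod>i\<in>?B0 \<union> ?U. g i)"
    by (intro prod.cong refl) auto
  also have "\<dots> = (\<Prod>i\<in>?B0. g i) * (\<Prod>i\<in>?U. g i)"
    by (rule prod.union_disjoint) auto
  also have "(\<Prod>i\<in>?U. g i) = (\<Prod>e\<in>Mt. \<Prod>i\<in>{i \<in> B. w i \<in> e}. g i)"
    using assms by (intro prod.UNION_disjoint) (auto simp: matching_def)
  finally show ?thesis .
qed

definition step_outcome :: "'v::linorder set set \<Rightarrow> ('t \<Rightarrow> 'v) \<Rightarrow> ('v set \<Rightarrow> 't set) \<Rightarrow> 't \<Rightarrow> 'v" where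
  "step_outcome Mt w S i =
     (if \<exists>e\<in>Mt. w i \<in> e
      then (let e = matched_edge Mt (w i) in if i \<in> S e then Min e else Max e)
      else w i)"

lemma step_pmf_eq_map_step_outcome:
  "step_pmf Mt w = map_pmf (step_outcome Mt w) (Pi_pmf Mt {} (\<lambda>e. urn_draw e w))"
  unfolding step_pmf_def step_outcome_def ..

lemma prod_step_outcome:
  fixes w :: "'t::finite \<Rightarrow> 'v::{finite,linorder}"
  assumes "matching Mt"
  shows "(\<Prod>i\<in>B. h (step_outcome Mt w S i))
           = (\<Prod>i\<in>{i \<in> B. \<forall>e\<in>Mt. w i \<notin> e}. h (w i))
             * (\<Prod>e\<in>Mt. subset_weight {i \<in> B. w i \<in> e} (h (Min e)) (h (Max e)) (S e))"
  unfolding prod_split_matching[OF assms, where B = B and w = w] subset_weight_def step_outcome_def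
  using matched_edge_eq[OF assms] by (intro arg_cong2[where f = "(*)"] prod.cong refl) auto

lemma prod_mat_vec_match_matrix:
  fixes w :: "'t::finite \<Rightarrow> 'v::{finite,linorder}"
  assumes "matching Mt"
  shows "(\<Prod>i\<in>B. mat_vec (match_matrix Mt) h (w i))
           = (\<Prod>i\<in>{i \<in> B. \<forall>e\<in>Mt. w i \<notin> e}. h (w i))
             * (\<Prod>e\<in>Mt. ((h (Min e) + h (Max e)) / 2) ^ card {i \<in> B. w i \<in> e})"
  unfolding prod_split_matching[OF assms, where B = B and w = w]
proof (intro arg_cong2[where f = "(*)"] prod.cong refl)
  fix i assume "i \<in> {i \<in> B. \<forall>e\<in>Mt. w i \<notin> e}"
  then show "mat_vec (match_matrix Mt) h (w i) = h (w i)" by (simp add: mat_vec_match_matrix_unmatched)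
next
  fix e assume e: "e \<in> Mt"
  have "(\<Prod>i\<in>{i \<in> B. w i \<in> e}. mat_vec (match_matrix Mt) h (w i))
      = (\<Prod>i\<in>{i \<in> B. w i \<in> e}. (h (Min e) + h (Max e)) / 2)"
    using mat_vec_match_matrix_matched[OF assms e] by (intro prod.cong refl) simp
  then show "(\<Prod>i\<in>{i \<in> B. w i \<in> e}. mat_vec (match_matrix Mt) h (w i))
      = ((h (Min e) + h (Max e)) / 2) ^ card {i \<in> B. w i \<in> e}" by simp
qed

lemma expectation_step_pmf_prod_le:
  fixes Mt :: "'v::{finite,linorder} set set" and w :: "'t::finite \<Rightarrow> 'v"
  assumes "matching Mt" "\<And>v. 0 \<le> h v"
  shows "measure_pmf.expectation (step_pmf Mt w) (\<lambda>w'. \<Prod>i\<in>B. h (w' i))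
           \<le> (\<Prod>i\<in>B. mat_vec (match_matrix Mt) h (w i))"
proof -
  define c where "c = (\<Prod>i\<in>{i \<in> B. \<forall>e\<in>Mt. w i \<notin> e}. h (w i))"
  define X where "X e = subset_weight {i \<in> B. w i \<in> e} (h (Min e)) (h (Max e))" for e
  have "measure_pmf.expectation (step_pmf Mt w) (\<lambda>w'. \<Prod>i\<in>B. h (w' i))
      = measure_pmf.expectation (Pi_pmf Mt {} (\<lambda>e. urn_draw e w)) (\<lambda>S. c * (\<Prod>e\<in>Mt. X e (S e)))"
    by (simp add: step_pmf_eq_map_step_outcome prod_step_outcome[OF assms(1)] c_def X_def)
  also have "\<dots> = c * measure_pmf.expectation (Pi_pmf Mt {} (\<lambda>e. urn_draw e w)) (\<lambda>S. \<Prod>e\<in>Mt. X e (S e))"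
    by (rule integral_mult_right_zero)
  also have "\<dots> = c * (\<Prod>e\<in>Mt. measure_pmf.expectation (urn_draw e w) (X e))"
    unfolding X_def
    by (subst expectation_prod_Pi_pmf)
       (auto intro!: integrable_measure_pmf_finite subset_weight_nonneg simp: assms(2))
  also have "\<dots> \<le> c * (\<Prod>e\<in>Mt. ((h (Min e) + h (Max e)) / 2) ^ card {i \<in> B. w i \<in> e})"
    unfolding X_def c_def using assms(2)
    by (intro mult_left_mono prod_mono prod_nonneg conjI integral_nonneg_AE AE_pmfI subset_weight_nonneg
        expectation_urn_draw_le) auto
  also have "\<dots> = (\<Prod>i\<in>B. mat_vec (match_matrix Mt) h (w i))"
    unfolding c_def prod_mat_vec_match_matrix[OF assms(1)] ..
  finally show ?thesis .
qed

lemma expectation_run_pmf_prod_le: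
  fixes M :: "nat \<Rightarrow> 'v::{finite,linorder} set set" and w0 :: "'t::finite \<Rightarrow> 'v"
  assumes "\<And>t. matching (M t)" "\<And>v. 0 \<le> h v"
  shows "measure_pmf.expectation (run_pmf M t1 w0 n) (\<lambda>w. \<Prod>i\<in>B. h (w i))
           \<le> (\<Prod>i\<in>B. mat_vec (mat_prod_from M (Suc t1) n) h (w0 i))"
  using assms(2)
proof (induction n arbitrary: h)
  case (Suc n)
  define Mt where "Mt = M (t1 + Suc n)"
  define g where "g = mat_vec (match_matrix Mt) h"
  have g_nonneg: "0 \<le> g v" for v
    unfolding g_def using Suc.prems by (intro mat_vec_nonneg match_matrix_nonneg)
  have "measure_pmf.expectation (run_pmf M t1 w0 (Suc n)) (\<lambda>w. \<Prod>i\<in>B. h (w i))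
      = (\<Sum>w\<in>UNIV. pmf (run_pmf M t1 w0 n) w * measure_pmf.expectation (step_pmf Mt w) (\<lambda>w'. \<Prod>i\<in>B. h (w' i)))"
    unfolding Mt_def by (simp add: pmf_expectation_bind[where A = UNIV])
  also have "\<dots> \<le> (\<Sum>w\<in>UNIV. pmf (run_pmf M t1 w0 n) w * (\<Prod>i\<in>B. g (w i)))"
    unfolding g_def Mt_def using assms(1) Suc.prems
    by (intro sum_mono mult_left_mono expectation_step_pmf_prod_le) auto
  also have "\<dots> = measure_pmf.expectation (run_pmf M t1 w0 n) (\<lambda>w. \<Prod>i\<in>B. g (w i))"
    by (simp add: integral_measure_pmf[where A = UNIV])
  also have "\<dots> \<le> (\<Prod>i\<in>B. mat_vec (mat_prod_from M (Suc t1) n) g (w0 i))"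
    using Suc.IH g_nonneg .
  also have "\<dots> = (\<Prod>i\<in>B. mat_vec (mat_prod_from M (Suc t1) (Suc n)) h (w0 i))"
    by (simp add: g_def Mt_def mat_vec_mat_mult)
  finally show ?case .
qed simp

lemma prod_indicator_eq:
  fixes B :: "'t::finite set"
  shows "(\<Prod>i\<in>B. indicator D (w i) :: real) = indicator {w. \<forall>i\<in>B. w i \<in> D} w"
proof (cases "\<forall>i\<in>B. w i \<in> D")
  case False
  then obtain i where "i \<in> B" "w i \<notin> D" by blast
  then show ?thesis using False by (simp add: prod_zero_iff) (metis indicator_simps(2))
qed simp

lemma prob_run_pmf_all_in_le:
  fixes M :: "nat \<Rightarrow> 'v::{finite,linorder} set set" and w0 :: "'t::finite \<Rightarrow> 'v"
  assumes "\<And>t. matching (M t)"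
  shows "measure_pmf.prob (run_pmf M t1 w0 n) {w. \<forall>i\<in>B. w i \<in> D}
           \<le> (\<Prod>i\<in>B. mat_row_set (mat_prod_from M (Suc t1) n) (w0 i) D)"
  using expectation_run_pmf_prod_le[OF assms, where h = "indicator D" and B = B]
  by (simp add: prod_indicator_eq mat_row_set_eq_mat_vec)

lemma prob_run_pmf_in:
  fixes M :: "nat \<Rightarrow> 'v::{finite,linorder} set set" and w0 :: "'t::finite \<Rightarrow> 'v"
  assumes "\<And>t. matching (M t)"
  shows "measure_pmf.prob (run_pmf M t1 w0 n) {w. w i \<in> D} = mat_row_set (mat_prod_from M (Suc t1) n) (w0 i) D"
proof -
  let ?p = "run_pmf M t1 w0 n" and ?P = "mat_prod_from M (Suc t1) n"
  have le: "measure_pmf.prob ?p {w. w i \<in> D'} \<le> mat_row_set ?P (w0 i) D'" for D'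
    using prob_run_pmf_all_in_le[OF assms, where B = "{i}" and D = D'] by simp
  have "measure_pmf.prob ?p {w. w i \<in> - D} = 1 - measure_pmf.prob ?p {w. w i \<in> D}"
    using measure_pmf.prob_compl[of "{w. w i \<in> D}" ?p] by (simp add: Compl_eq_Diff_UNIV[symmetric] Collect_neg_eq)
  moreover have "mat_row_set ?P (w0 i) (- D) = 1 - mat_row_set ?P (w0 i) D"
    by (rule mat_row_set_Compl) (simp add: mat_vec_mat_prod_from_one assms)
  ultimately show ?thesis using le[of D] le[of "- D"] by linarith
qed

theorem lemma3p2:
  fixes E :: "'v::{finite,linorder} set set"
    and M :: "nat \<Rightarrow> 'v set set"
    and w0 :: "'t::finite \<Rightarrow> 'v"
    and B :: "'t set"
    and D :: "'v set"
    and t1 t2 :: nat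
  assumes "\<forall>e\<in>E. card e = 2"
    and "\<forall>t. matching (M t) \<and> M t \<subseteq> E"
    and "t1 < t2"
  shows "measure_pmf.prob (config_at M t1 w0 t2) {w. \<forall>i\<in>B. w i \<in> D}
           \<le> (\<Prod>i\<in>B. mat_row_set (mat_interval M (Suc t1) t2) (w0 i) D)
       \<and> (\<Prod>i\<in>B. mat_row_set (mat_interval M (Suc t1) t2) (w0 i) D)
           = (\<Prod>i\<in>B. measure_pmf.prob (config_at M t1 w0 t2) {w. w i \<in> D})"
proof -
  have matchings: "\<And>t. matching (M t)" using assms(2) by blast
  have "config_at M t1 w0 t2 = run_pmf M t1 w0 (t2 - t1)"
    and "mat_interval M (Suc t1) t2 = mat_prod_from M (Suc t1) (t2 - t1)"
    by (simp_all add: config_at_def mat_interval_def)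
  then show ?thesis
    using prob_run_pmf_all_in_le[where M = M, OF matchings]
    by (simp only: prob_run_pmf_in[where M = M, OF matchings]) simp
qed

end
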